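(* Let $G=(V,E)$ be an undirected, unweighted, 2-edge-connected graph and let $T$ be a spanning tree of $G$. Fix an edge $e$ of $T$, and let $X$ and $Y=V\setminus X$ be the vertex sets of the two connected components of $T-e$. Let $S_e$ be the set of swap edges of $e$; write every $g\in S_e$ as $g=(a,b)$ with $a\in X$, $b\in Y$. For $x\in X$ and $g=(a,b),g'=(a',b')\in S_e$ (not necessarily distinct) put $$\phi_x(g,g') := d_T(x,a)+d_T(b,b')+d_T(a',x).$$ For every $x\in X$ fix a pair $(g_x,g'_x)\in \arg\max_{(g,g')\in S_e\times S_e}\phi_x(g,g')$, and write $g_x=(a_x,b_x)$, $g'_x=(a'_x,b'_x)$ with $a_x,a'_x\in X$ and $b_x,b'_x\in Y$. Let $T_X$ be the subtree of $T$ induced by $X$, and for an edge $e'=(u,v)$ of $T_X$ let $U(e',u)$ and $U(e',v)$ denote the vertex sets of the connected components of $T_X-e'$ containing $u$ and $v$, respectively. Let $e'=(x,z)$ be an edge of $T_X$ such that $\phi_z(g_x,g'_x)<\phi_z(g_z,g'_z)$. Then at least one of the following holds: (i) $a_z,a'_z\in U(e',x)$ and $\{a_x,a'_x\}\cap U(e',z)\neq\emptyset$; (ii) $a_x,a'_x\in U(e',z)$ and $\{a_z,a'_z\}\cap U(e',x)\neq\emptyset$.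
   Context: $d_T(u,v)$ denotes the number of edges on the unique path between $u$ and $v$ in the tree $T$. For an edge $e$ of $T$, the set $S_e$ of swap edges of $e$ consists of all edges of $E\setminus\{e\}$ whose endpoints lie in different connected components of $T-e$. *)

theory Defs
  imports Main
begin

definition simple_graph :: "'a set \<Rightarrow> 'a set set \<Rightarrow> bool" where
  "simple_graph V E \<longleftrightarrow> finite V \<and>
     (\<forall>f\<in>E. \<exists>p q. f = {p, q} \<and> p \<noteq> q \<and> p \<in> V \<and> q \<in> V)"

definition adj :: "'a set set \<Rightarrow> 'a \<Rightarrow> 'a \<Rightarrow> bool" where
  "adj F p q \<longleftrightarrow> {p, q} \<in> F"

definition component :: "'a set set \<Rightarrow> 'a \<Rightarrow> 'a set" where
  "component F p = {q. (adj F)\<^sup>*\<^sup>* p q}"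

definition connected_on :: "'a set \<Rightarrow> 'a set set \<Rightarrow> bool" where
  "connected_on V F \<longleftrightarrow> (\<forall>p\<in>V. \<forall>q\<in>V. (adj F)\<^sup>*\<^sup>* p q)"

definition two_edge_connected :: "'a set \<Rightarrow> 'a set set \<Rightarrow> bool" where
  "two_edge_connected V E \<longleftrightarrow> connected_on V E \<and> (\<forall>f\<in>E. connected_on V (E - {f}))"

definition acyclic_graph :: "'a set set \<Rightarrow> bool" where
  "acyclic_graph F \<longleftrightarrow> \<not> (\<exists>vs. length vs \<ge> 3 \<and> distinct vs \<and>
      (\<forall>i < length vs. {vs ! i, vs ! ((i + 1) mod length vs)} \<in> F))"

definition spanning_tree :: "'a set \<Rightarrow> 'a set set \<Rightarrow> 'a set set \<Rightarrow> bool" where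
  "spanning_tree V E T \<longleftrightarrow> T \<subseteq> E \<and> connected_on V T \<and> acyclic_graph T"

definition dist :: "'a set set \<Rightarrow> 'a \<Rightarrow> 'a \<Rightarrow> nat" where
  "dist F p q = (LEAST n. (adj F ^^ n) p q)"

definition swap_pairs :: "'a set set \<Rightarrow> 'a set \<Rightarrow> 'a set \<Rightarrow> 'a set \<Rightarrow> ('a \<times> 'a) set" where
  "swap_pairs E e X Y = {(a, b). {a, b} \<in> E \<and> {a, b} \<noteq> e \<and> a \<in> X \<and> b \<in> Y}"

definition phi :: "'a set set \<Rightarrow> 'a \<Rightarrow> ('a \<times> 'a) \<times> ('a \<times> 'a) \<Rightarrow> nat" where
  "phi T x gg = (case gg of ((a, b), (a', b')) \<Rightarrow> dist T x a + dist T b b' + dist T a' x)"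

definition induced_edges :: "'a set set \<Rightarrow> 'a set \<Rightarrow> 'a set set" where
  "induced_edges T X = {f \<in> T. f \<subseteq> X}"

end

theory Submission
  imports Defs
begin

text \<open>Removing the edge \<open>{x, z}\<close> of \<open>T\<^sub>X\<close> splits \<open>X\<close> into \<open>U(e', x)\<close> and \<open>U(e', z)\<close>, and
  in a tree every path from \<open>z\<close> to a vertex of \<open>U(e', x)\<close> runs through \<open>x\<close>: so
  \<open>d(z, a) = d(x, a) + 1\<close> on \<open>U(e', x)\<close> and \<open>d(x, a) = d(z, a) + 1\<close> on \<open>U(e', z)\<close>.
  Since \<open>\<phi>\<close> measures distances to the two \<open>X\<close>-endpoints \<open>a, a'\<close> of a pair of swap edges,
  \<open>\<phi>\<^sub>z(g, g') - \<phi>\<^sub>x(g, g')\<close> is the number of these endpoints in \<open>U(e', x)\<close> minus the number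
  in \<open>U(e', z)\<close>. Comparing \<open>\<phi>\<^sub>z(g\<^sub>x, g'\<^sub>x) < \<phi>\<^sub>z(g\<^sub>z, g'\<^sub>z)\<close> with the maximality
  \<open>\<phi>\<^sub>x(g\<^sub>z, g'\<^sub>z) \<le> \<phi>\<^sub>x(g\<^sub>x, g'\<^sub>x)\<close> leaves exactly the two listed arrangements.\<close>

lemma simple_graph_edge_neq:
  assumes "simple_graph V E" and "{p, q} \<in> E"
  shows "p \<noteq> q"
proof -
  obtain p' q' where "{p, q} = {p', q'}" "p' \<noteq> q'" using assms unfolding simple_graph_def by blast
  then show ?thesis by (metis doubleton_eq_iff)
qed

lemma adj_commute: "adj F p q = adj F q p"
  by (simp add: adj_def insert_commute)

lemma rtranclp_adj_commute: "(adj F)\<^sup>*\<^sup>* p q \<Longrightarrow> (adj F)\<^sup>*\<^sup>* q p"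
  by (rule sympD[OF symp_rtranclp]) (simp add: symp_def adj_commute)

lemma rtranclp_adj_mono: "F \<subseteq> F' \<Longrightarrow> (adj F)\<^sup>*\<^sup>* p q \<Longrightarrow> (adj F')\<^sup>*\<^sup>* p q"
  by (erule rtranclp_mono[THEN predicate2D, rotated]) (auto simp: adj_def)

lemma relpowp_adj_commute: "(adj F ^^ n) p q \<Longrightarrow> (adj F ^^ n) q p"
proof (induction n arbitrary: q)
  case (Suc n)
  then obtain y where "(adj F ^^ n) p y" "adj F y q" by (meson relpowp_Suc_E)
  then show ?case using Suc.IH adj_commute relpowp_Suc_I2 by metis
qed simp

lemma dist_commute: "dist F p q = dist F q p"
  unfolding dist_def using relpowp_adj_commute by metis

lemma relpowp_dist: "(adj F)\<^sup>*\<^sup>* p q \<Longrightarrow> (adj F ^^ dist F p q) p q"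
  unfolding dist_def rtranclp_power by (elim exE) (rule LeastI)

lemma dist_le: "(adj F ^^ n) p q \<Longrightarrow> dist F p q \<le> n"
  unfolding dist_def by (rule Least_le)

lemma relpowp_adj_avoids_edge_or_shorter:
  assumes "(adj F ^^ n) p q"
  shows "(adj (F - {{p, r}}))\<^sup>*\<^sup>* p q \<or> (\<exists>m<n. (adj F ^^ m) r q)"
  using assms
proof (induction n arbitrary: q)
  case (Suc n)
  then obtain y where y: "(adj F ^^ n) p y" "adj F y q" by (meson relpowp_Suc_E)
  from Suc.IH[OF y(1)] show ?case
  proof
    assume py: "(adj (F - {{p, r}}))\<^sup>*\<^sup>* p y"
    show ?thesis
    proof (cases "{y, q} = {p, r}")
      case True
      then have "q = p \<or> q = r" by (metis doubleton_eq_iff)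
      then show ?thesis by auto
    next
      case False
      then have "adj (F - {{p, r}}) y q" using y(2) by (simp add: adj_def)
      then show ?thesis using py by (meson rtranclp.rtrancl_into_rtrancl)
    qed
  next
    assume "\<exists>m<n. (adj F ^^ m) r y"
    then obtain m where "m < n" "(adj F ^^ m) r y" by blast
    then have "(adj F ^^ Suc m) r q" using y(2) by auto
    then show ?thesis using \<open>m < n\<close> by (metis Suc_less_eq)
  qed
qed simp

lemma relpowp_imp_distinct_walk:
  "(R ^^ n) p q \<Longrightarrow> \<exists>vs. vs \<noteq> [] \<and> hd vs = p \<and> last vs = q \<and> distinct vs \<and>
     (\<forall>i. Suc i < length vs \<longrightarrow> R (vs ! i) (vs ! Suc i))"
proof (induction n arbitrary: q)
  case 0
  then show ?case by (intro exI[of _ "[p]"]) auto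
next
  case (Suc n)
  then obtain y where y: "(R ^^ n) p y" "R y q" by (meson relpowp_Suc_E)
  from Suc.IH[OF y(1)] obtain vs where vs: "vs \<noteq> []" "hd vs = p" "last vs = y" "distinct vs"
     "\<forall>i. Suc i < length vs \<longrightarrow> R (vs ! i) (vs ! Suc i)" by blast
  show ?case
  proof (cases "q \<in> set vs")
    case True
    then obtain k where k: "k < length vs" "vs ! k = q" by (meson in_set_conv_nth)
    show ?thesis
      using vs k by (intro exI[of _ "take (Suc k) vs"])
        (auto simp: hd_take last_conv_nth min_def intro: arg_cong[where f="(!) vs"])
  next
    case False
    have "R ((vs @ [q]) ! i) ((vs @ [q]) ! Suc i)" if i: "Suc i < length (vs @ [q])" for i
    proof (cases "Suc i < length vs")
      case True
      then show ?thesis using vs by (simp add: nth_append)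
    next
      case False
      then have "i = length vs - 1" using i by simp
      then show ?thesis using vs y(2) False i by (simp add: nth_append last_conv_nth)
    qed
    then show ?thesis using vs False by (intro exI[of _ "vs @ [q]"]) auto
  qed
qed

lemma acyclic_edge_removal_disconnects:
  assumes ac: "acyclic_graph F" and f: "{p, r} \<in> F" and ne: "p \<noteq> r"
  shows "\<not> (adj (F - {{p, r}}))\<^sup>*\<^sup>* p r"
proof
  assume "(adj (F - {{p, r}}))\<^sup>*\<^sup>* p r"
  then obtain n where "(adj (F - {{p, r}}) ^^ n) p r" by (meson rtranclp_power)
  from relpowp_imp_distinct_walk[OF this] obtain vs where
    vs: "vs \<noteq> []" "hd vs = p" "last vs = r" "distinct vs"
      "\<forall>i. Suc i < length vs \<longrightarrow> adj (F - {{p, r}}) (vs ! i) (vs ! Suc i)" by blast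
  have first: "vs ! 0 = p" using vs by (simp add: hd_conv_nth)
  have final: "vs ! (length vs - 1) = r" using vs by (simp add: last_conv_nth)
  have "length vs \<noteq> 1" using first final ne by auto
  moreover have "length vs \<noteq> 2"
  proof
    assume "length vs = 2"
    then have "adj (F - {{p, r}}) (vs ! 0) (vs ! 1)" using vs(5) by auto
    then show False using first final \<open>length vs = 2\<close> by (simp add: adj_def)
  qed
  moreover have "length vs \<noteq> 0" using vs(1) by simp
  ultimately have len: "length vs \<ge> 3" by presburger
  \<comment> \<open>the walk closes into a cycle through the removed edge \<open>{r, p}\<close>\<close>
  have "{vs ! i, vs ! ((i + 1) mod length vs)} \<in> F" if i: "i < length vs" for i
  proof (cases "Suc i < length vs")
    case True
    then show ?thesis using vs(5) by (auto simp: adj_def)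
  next
    case False
    then have "length vs = Suc i" using i by simp
    then show ?thesis using first final f by (simp add: insert_commute)
  qed
  then show False using ac len vs(4) unfolding acyclic_graph_def by blast
qed

lemma rtranclp_adj_edge_sides:
  assumes "(adj F)\<^sup>*\<^sup>* x a"
  shows "(adj (F - {{x, z}}))\<^sup>*\<^sup>* x a \<or> (adj (F - {{x, z}}))\<^sup>*\<^sup>* z a"
proof -
  from relpowp_adj_avoids_edge_or_shorter[OF relpowp_dist[OF assms], of z] show ?thesis
  proof
    assume "\<exists>m<dist F x a. (adj F ^^ m) z a"
    then obtain m where m: "m < dist F x a" "(adj F ^^ m) z a" by blast
    from relpowp_adj_avoids_edge_or_shorter[OF m(2), of x] show ?thesis
    proof
      assume "(adj (F - {{z, x}}))\<^sup>*\<^sup>* z a"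
      then show ?thesis by (simp add: insert_commute)
    next
      assume "\<exists>m'<m. (adj F ^^ m') x a"
      then show ?thesis using m(1) dist_le by fastforce
    qed
  qed simp
qed

lemma dist_across_edge:
  assumes ac: "acyclic_graph T" and f: "{x, z} \<in> T" and ne: "x \<noteq> z"
    and xa: "(adj (T - {{x, z}}))\<^sup>*\<^sup>* x a"
  shows "dist T z a = dist T x a + 1"
proof -
  have "(adj T)\<^sup>*\<^sup>* x a" using xa by (rule rtranclp_adj_mono[rotated]) auto
  then have "(adj T ^^ dist T x a) x a" by (rule relpowp_dist)
  moreover have "adj T z x" using f by (simp add: adj_def insert_commute)
  ultimately have za: "(adj T ^^ Suc (dist T x a)) z a" using relpowp_Suc_I2 by metis
  then have "(adj T ^^ dist T z a) z a" using relpowp_dist relpowp_imp_rtranclp by metis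
  from relpowp_adj_avoids_edge_or_shorter[OF this, of x] show ?thesis
  proof
    assume "(adj (T - {{z, x}}))\<^sup>*\<^sup>* z a"
    moreover have "(adj (T - {{z, x}}))\<^sup>*\<^sup>* a x"
      using rtranclp_adj_commute[OF xa] by (simp add: insert_commute)
    ultimately have "(adj (T - {{z, x}}))\<^sup>*\<^sup>* z x" by simp
    moreover have "{z, x} \<in> T" using f by (simp add: insert_commute)
    ultimately show ?thesis using acyclic_edge_removal_disconnects[OF ac _ ne[symmetric]] by blast
  next
    assume "\<exists>m<dist T z a. (adj T ^^ m) x a"
    then show ?thesis using dist_le[OF za] dist_le by fastforce
  qed
qed

lemma tree_edge_sides_dist:
  assumes ac: "acyclic_graph T" and FT: "F \<subseteq> T" and f: "{x, z} \<in> T" and ne: "x \<noteq> z"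
    and xa: "(adj F)\<^sup>*\<^sup>* x a"
  shows "a \<in> component (F - {{x, z}}) x \<and> dist T z a = dist T x a + 1
    \<or> a \<in> component (F - {{x, z}}) z \<and> dist T x a = dist T z a + 1"
proof -
  have sub: "F - {{x, z}} \<subseteq> T - {{x, z}}" using FT by blast
  from rtranclp_adj_edge_sides[OF xa, of z] show ?thesis
  proof
    assume "(adj (F - {{x, z}}))\<^sup>*\<^sup>* x a"
    then show ?thesis
      using dist_across_edge[OF ac f ne] rtranclp_adj_mono[OF sub]
      by (simp add: component_def)
  next
    assume "(adj (F - {{x, z}}))\<^sup>*\<^sup>* z a"
    moreover have "T - {{z, x}} = T - {{x, z}}" by (simp add: insert_commute)
    ultimately show ?thesis
      using dist_across_edge[OF ac _ ne[symmetric], of a] f rtranclp_adj_mono[OF sub]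
      by (simp add: component_def insert_commute)
  qed
qed

lemma component_connected_induced:
  assumes "p \<in> component F u" and "q \<in> component F u"
  shows "(adj (induced_edges F (component F u)))\<^sup>*\<^sup>* p q"
proof -
  let ?C = "component F u"
  have from_u: "(adj (induced_edges F ?C))\<^sup>*\<^sup>* u w" if "(adj F)\<^sup>*\<^sup>* u w" for w
    using that
  proof (induction rule: rtranclp_induct)
    case (step w w')
    then have "w \<in> ?C" "w' \<in> ?C" by (auto simp: component_def)
    with step have "adj (induced_edges F ?C) w w'" by (auto simp: adj_def induced_edges_def)
    with step.IH show ?case by (rule rtranclp.rtrancl_into_rtrancl)
  qed simp
  have "(adj (induced_edges F ?C))\<^sup>*\<^sup>* u p" "(adj (induced_edges F ?C))\<^sup>*\<^sup>* u q"
    using from_u assms by (auto simp: component_def)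
  then show ?thesis by (blast intro: rtranclp_trans rtranclp_adj_commute)
qed

theorem lemma1:
  fixes V :: "'a set" and E T :: "'a set set" and u v x z :: 'a
    and X Y :: "'a set" and S :: "('a \<times> 'a) set" and TX :: "'a set set"
    and Ux Uz :: "'a set" and sel :: "'a \<Rightarrow> ('a \<times> 'a) \<times> ('a \<times> 'a)"
  assumes G: "simple_graph V E" and "two_edge_connected V E"
    and T: "spanning_tree V E T"
    and "{u, v} \<in> T"
    and X: "X = component (T - {{u, v}}) u"
    and "Y = V - X"
    and S: "S = swap_pairs E {u, v} X Y"
    and sel: "\<forall>w\<in>X. sel w \<in> S \<times> S \<and> (\<forall>p\<in>S \<times> S. phi T w p \<le> phi T w (sel w))"
    and TX: "TX = induced_edges T X"
    and e': "{x, z} \<in> TX"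
    and Ux: "Ux = component (TX - {{x, z}}) x"
    and Uz: "Uz = component (TX - {{x, z}}) z"
    and lt: "phi T z (sel x) < phi T z (sel z)"
  shows "(fst (fst (sel z)) \<in> Ux \<and> fst (snd (sel z)) \<in> Ux \<and>
            (fst (fst (sel x)) \<in> Uz \<or> fst (snd (sel x)) \<in> Uz))
       \<or> (fst (fst (sel x)) \<in> Uz \<and> fst (snd (sel x)) \<in> Uz \<and>
            (fst (fst (sel z)) \<in> Ux \<or> fst (snd (sel z)) \<in> Ux))"
proof -
  have ac: "acyclic_graph T" and TE: "T \<subseteq> E" using T by (auto simp: spanning_tree_def)
  have xz: "{x, z} \<in> T" "x \<in> X" "z \<in> X" using e' TX by (auto simp: induced_edges_def)
  have ne: "x \<noteq> z" using simple_graph_edge_neq[OF G] xz(1) TE by blast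
  have sides: "a \<in> Ux \<and> dist T z a = dist T x a + 1 \<or> a \<in> Uz \<and> dist T x a = dist T z a + 1"
    if "a \<in> X" for a
  proof -
    have "induced_edges (T - {{u, v}}) X \<subseteq> TX" using TX by (auto simp: induced_edges_def)
    moreover have "(adj (induced_edges (T - {{u, v}}) X))\<^sup>*\<^sup>* x a"
      using component_connected_induced[of x "T - {{u, v}}" u a] xz(2) that X by blast
    ultimately have "(adj TX)\<^sup>*\<^sup>* x a" by (rule rtranclp_adj_mono)
    then show ?thesis
      using tree_edge_sides_dist[OF ac _ xz(1) ne] TX Ux Uz by (auto simp: induced_edges_def)
  qed
  obtain ax bx ax' bx' where sx: "sel x = ((ax, bx), (ax', bx'))" by (metis prod.exhaust)
  obtain az bz az' bz' where sz: "sel z = ((az, bz), (az', bz'))" by (metis prod.exhaust)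
  have "sel x \<in> S \<times> S" "sel z \<in> S \<times> S" using sel xz by auto
  then have "ax \<in> X" "ax' \<in> X" "az \<in> X" "az' \<in> X" using sx sz S by (auto simp: swap_pairs_def)
  note ends = this[THEN sides]
  have "phi T x (sel z) \<le> phi T x (sel x)" using sel xz(2) \<open>sel z \<in> S \<times> S\<close> by auto
  then have "dist T x az + dist T bz bz' + dist T x az' \<le> dist T x ax + dist T bx bx' + dist T x ax'"
    by (simp add: sx sz phi_def dist_commute[of T _ x])
  moreover have "dist T z ax + dist T bx bx' + dist T z ax' < dist T z az + dist T bz bz' + dist T z az'"
    using lt by (simp add: sx sz phi_def dist_commute[of T _ z])
  ultimately show ?thesis using ends unfolding sx sz fst_conv snd_conv by linarith
qed

end
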